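(* For every integer $n\ge 4$ there exist $n$ pairwise distinct parallel lines in the plane such that there is no regular $n$-gon whose $n$ vertices lie one on each of these lines. *)

theory Defs
  imports Complex_Main
begin

text \<open>The plane is identified with the complex numbers.
  The line through the point a with direction vector d (d nonzero).\<close>
definition line :: "complex \<Rightarrow> complex \<Rightarrow> complex set" where
  "line a d = {a + complex_of_real t * d | t. True}"

text \<open>P 0, ..., P (n-1) are the vertices (in cyclic order) of a regular n-gon:
  a centre c and a nonzero complex number z (radius and rotation) such that
  P k = c + z * exp(2 pi i k / n).\<close>
definition regular_ngon :: "nat \<Rightarrow> (nat \<Rightarrow> complex) \<Rightarrow> bool" where
  "regular_ngon n P \<longleftrightarrow> (\<exists>c z. z \<noteq> 0 \<and>
     (\<forall>k<n. P k = c + z * cis (2 * pi * real k / real n)))"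

end

theory Submission
  imports Defs
begin

text \<open>Take horizontal lines at heights \<open>h\<^sub>0, \<dots>, h\<^bsub>n-1\<^esub>\<close> with \<open>\<Sum> h\<^sub>i = 0\<close> but
  \<open>\<Sum> h\<^sub>i\<^sup>3 \<noteq> 0\<close>. The heights of the vertices \<open>c + z \<omega>\<^sup>k\<close> of a regular \<open>n\<close>-gon are
  \<open>Im c + Im (z \<omega>\<^sup>k)\<close>, and since \<open>(Im w)\<^sup>3\<close> is a linear combination of \<open>Im w\<close> and
  \<open>Im (w\<^sup>3)\<close> for \<open>|w|\<close> fixed, the vanishing of the first and third power sums of the
  \<open>n\<close>-th roots of unity (\<open>n \<ge> 4\<close>) makes the first and third power sums of the centred
  heights vanish. If the vertices lie one on each line, the first power sum forces
  \<open>Im c = 0\<close>, and then the third one contradicts \<open>\<Sum> h\<^sub>i\<^sup>3 \<noteq> 0\<close>.\<close>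

lemma sum_roots_unity_power:
  assumes "\<not> n dvd j"
  shows "(\<Sum>k<n. cis (2 * pi * real k / real n) ^ j) = 0"
proof (cases "n = 0")
  case False
  define w where "w = cis (2 * pi * real j / real n)"
  have roots: "cis (2 * pi * real k / real n) ^ j = w ^ k" for k
    unfolding w_def DeMoivre by (simp add: field_simps)
  have "w ^ n = cis (2 * pi) ^ j"
    using False unfolding w_def DeMoivre by (simp add: field_simps)
  also have "cis (2 * pi) = 1"
    by (simp add: complex_eq_iff)
  finally have "w ^ n = 1" by simp
  have "w \<noteq> 1"
  proof
    assume "w = 1"
    then obtain m :: int where "2 * pi * real j / real n = 2 * pi * of_int m"
      by (auto simp: w_def complex_eq_iff cos_one_2pi_int)
    with False have "of_nat j = (of_int (int n * m) :: real)" by (simp add: field_simps)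
    hence "int j = int n * m" using of_int_eq_iff by fastforce
    hence "n dvd j" by (metis dvdI int_dvd_int_iff)
    with assms show False ..
  qed
  have "(\<Sum>k<n. cis (2 * pi * real k / real n) ^ j) = (\<Sum>k<n. w ^ k)"
    by (simp add: roots)
  also have "\<dots> = 0"
    using geometric_sum[OF \<open>w \<noteq> 1\<close>] \<open>w ^ n = 1\<close> by simp
  finally show ?thesis .
qed simp

lemma Im_cube: "Im w ^ 3 = (3 * (cmod w)\<^sup>2 * Im w - Im (w ^ 3)) / 4"
proof (cases w)
  case (Complex a b)
  then have "(cmod w)\<^sup>2 = a\<^sup>2 + b\<^sup>2" by (simp add: cmod_power2)
  with Complex show ?thesis
    by (simp add: power3_eq_cube power2_eq_square algebra_simps)
qed

lemma regular_ngon_Im_power_sums: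
  assumes "regular_ngon n P" and "\<not> n dvd 1" and "\<not> n dvd 3"
  obtains y where "(\<Sum>k<n. Im (P k) - y) = 0" and "(\<Sum>k<n. (Im (P k) - y) ^ 3) = 0"
proof -
  obtain c z where P: "\<And>k. k < n \<Longrightarrow> P k = c + z * cis (2 * pi * real k / real n)"
    using assms(1) unfolding regular_ngon_def by blast
  define \<omega> where "\<omega> k = cis (2 * pi * real k / real n)" for k
  define u where "u k = Im (z * \<omega> k)" for k
  have centred: "Im (P k) - Im c = u k" if "k < n" for k
    using P[OF that] by (simp add: u_def \<omega>_def)
  have power_sum: "(\<Sum>k<n. \<omega> k ^ j) = 0" if "\<not> n dvd j" for j
    unfolding \<omega>_def using that by (rule sum_roots_unity_power)
  have sum_u: "(\<Sum>k<n. u k) = 0"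
  proof -
    have "(\<Sum>k<n. u k) = Im (z * (\<Sum>k<n. \<omega> k ^ 1))"
      by (simp add: u_def sum_distrib_left Im_sum)
    also have "\<dots> = 0"
      by (simp only: power_sum[OF assms(2)]) simp
    finally show ?thesis .
  qed
  have cube: "u k ^ 3 = (3 * (cmod z)\<^sup>2 * u k - Im (z ^ 3 * \<omega> k ^ 3)) / 4" for k
    unfolding u_def \<omega>_def by (simp only: Im_cube norm_mult norm_cis mult_1_right power_mult_distrib)
  have "(\<Sum>k<n. u k ^ 3) = (3 * (cmod z)\<^sup>2 * (\<Sum>k<n. u k) - Im (z ^ 3 * (\<Sum>k<n. \<omega> k ^ 3))) / 4"
    by (simp only: cube sum_divide_distrib[symmetric] sum_subtractf sum_distrib_left[symmetric]
        Im_sum[symmetric] mult.assoc)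
  also have "\<dots> = 0"
    by (simp only: sum_u power_sum[OF assms(3)]) simp
  finally have "(\<Sum>k<n. u k ^ 3) = 0" .
  with sum_u show ?thesis
    by (intro that[of "Im c"]) (simp_all add: centred)
qed

lemma line_horizontal: "line (complex_of_real h * \<i>) 1 = {x. Im x = h}"
proof (intro set_eqI iffI)
  fix x assume "x \<in> {x. Im x = h}"
  then show "x \<in> line (complex_of_real h * \<i>) 1"
    unfolding line_def by (auto intro!: exI[of _ "Re x"] simp: complex_eq_iff)
qed (auto simp: line_def)

lemma sum_of_nat_cube: "(\<Sum>i<n. real i ^ 3) = (real n * (real n - 1) / 2)\<^sup>2"
  by (induction n) (simp_all add: power2_eq_square power3_eq_cube algebra_simps)

lemma sum_of_nat: "(\<Sum>i<n. real i) = real n * (real n - 1) / 2"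
  by (induction n) (simp_all add: algebra_simps)

text \<open>The heights \<open>-T, 1, 2, \<dots>, n - 1\<close> with \<open>T = 1 + \<dots> + (n - 1)\<close>: their cubes sum
  to \<open>T\<^sup>2 - T\<^sup>3\<close>.\<close>
lemma exists_distinct_sum_zero_sum_cubes_nonzero:
  assumes "n \<ge> 3"
  shows "\<exists>h :: nat \<Rightarrow> real. inj_on h {..<n} \<and> (\<Sum>i<n. h i) = 0 \<and> (\<Sum>i<n. h i ^ 3) \<noteq> 0"
proof -
  define T where "T = real n * (real n - 1) / 2"
  define h where "h i = (if i = 0 then - T else real i)" for i
  have "real n * (real n - 1) \<ge> 3 * 2"
    using assms by (intro mult_mono) auto
  hence T: "T \<ge> 3" unfolding T_def by simp
  have "inj_on h {..<n}"
    using T by (auto simp: inj_on_def h_def split: if_splits)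
  moreover have "(\<Sum>i<n. h i) = 0"
  proof -
    have "(\<Sum>i<n. h i) = (\<Sum>i<n. real i) - real 0 + h 0"
      using assms by (simp add: sum.remove[of "{..<n}" 0] h_def)
    thus ?thesis by (simp add: sum_of_nat T_def h_def)
  qed
  moreover have "(\<Sum>i<n. h i ^ 3) = T\<^sup>2 * (1 - T)"
  proof -
    have "(\<Sum>i<n. h i ^ 3) = (\<Sum>i<n. real i ^ 3) - real 0 ^ 3 + h 0 ^ 3"
      using assms by (simp add: sum.remove[of "{..<n}" 0] h_def)
    also have "\<dots> = T\<^sup>2 - T ^ 3"
      by (simp add: sum_of_nat_cube T_def h_def)
    finally show ?thesis
      by (simp add: power2_eq_square power3_eq_cube algebra_simps)
  qed
  moreover have "T\<^sup>2 * (1 - T) \<noteq> 0" using T by simp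
  ultimately show ?thesis by metis
qed

theorem mainTheorem2:
  fixes n :: nat
  assumes "n \<ge> 4"
  shows "\<exists>(d::complex) (a::nat \<Rightarrow> complex). d \<noteq> 0 \<and>
           (\<forall>i<n. \<forall>j<n. i \<noteq> j \<longrightarrow> line (a i) d \<noteq> line (a j) d) \<and>
           \<not> (\<exists>P \<sigma>. regular_ngon n P \<and> bij_betw \<sigma> {..<n} {..<n} \<and>
                   (\<forall>k<n. P k \<in> line (a (\<sigma> k)) d))"
proof -
  obtain h :: "nat \<Rightarrow> real" where inj: "inj_on h {..<n}"
    and sum_h: "(\<Sum>i<n. h i) = 0" and cubes_h: "(\<Sum>i<n. h i ^ 3) \<noteq> 0"
    using exists_distinct_sum_zero_sum_cubes_nonzero[of n] assms by auto
  define a where "a i = complex_of_real (h i) * \<i>" for i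
  show ?thesis
  proof (intro exI[of _ 1] exI[of _ a] conjI allI impI notI)
    fix i j assume "i < n" "j < n" "i \<noteq> j" and same_line: "line (a i) 1 = line (a j) 1"
    have "complex_of_real (h i) * \<i> \<in> line (a j) 1"
      unfolding same_line[symmetric] by (simp add: a_def line_horizontal)
    then have "h i = h j" by (simp add: a_def line_horizontal)
    with inj \<open>i < n\<close> \<open>j < n\<close> \<open>i \<noteq> j\<close> show False by (auto dest: inj_onD)
  next
    assume "\<exists>P \<sigma>. regular_ngon n P \<and> bij_betw \<sigma> {..<n} {..<n} \<and> (\<forall>k<n. P k \<in> line (a (\<sigma> k)) 1)"
    then obtain P \<sigma> where P: "regular_ngon n P" and \<sigma>: "bij_betw \<sigma> {..<n} {..<n}"
      and on_lines: "\<forall>k<n. P k \<in> line (a (\<sigma> k)) 1" by blast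
    have perm: "(\<Sum>k<n. f (Im (P k))) = (\<Sum>i<n. f (h i))" for f :: "real \<Rightarrow> real"
      using sum.reindex_bij_betw[OF \<sigma>, of "\<lambda>i. f (h i)"] on_lines
      by (simp add: a_def line_horizontal)
    have "\<not> n dvd 1" "\<not> n dvd 3"
      using assms by (auto dest: dvd_imp_le)
    then obtain y where "(\<Sum>k<n. Im (P k) - y) = 0" and "(\<Sum>k<n. (Im (P k) - y) ^ 3) = 0"
      by (rule regular_ngon_Im_power_sums[OF P])
    then have "real n * y = 0" and "(\<Sum>i<n. (h i - y) ^ 3) = 0"
      using sum_h perm[of "\<lambda>t. t - y"] perm[of "\<lambda>t. (t - y) ^ 3"] by (simp_all add: sum_subtractf)
    with assms cubes_h show False by simp
  qed simp
qed

end
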